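(* Let $X=X_1\times\cdots\times X_n$ be finite, $S=\{1,\ldots,n\}$, and let $\varrho(\mathcal{C})\ge 0$ be given for every partition $\mathcal{C}$ of $S$. Then the recombination equation \[ \dot\omega_t=\sum_{\mathcal{A}\in\boldsymbol{P}(S)}\varrho(\mathcal{A})\big(\mathcal{R}_{\mathcal{A}}(\omega_t)-\omega_t\big) \] for a differentiable curve $(\omega_t)_{t\ge0}$ of probability measures on $X$ is the law of mass action of the chemical reaction network consisting of the reactions \[ \sum_{j=1}^{|\mathcal{C}|} x^{(j)} \xrightarrow{\ \varrho(\mathcal{C})/|\mathcal{C}|\ } \sum_{j=1}^{|\mathcal{C}|}\ \bigsqcup_{i=1}^{|\mathcal{C}|}\pi_{C_i}\big(x^{(i+j-1)}\big), \] one for every $\mathcal{C}=\{C_1,\ldots,C_{|\mathcal{C}|}\}\in\boldsymbol{P}(S)$ and every ordered tuple $(x^{(1)},\ldots,x^{(|\mathcal{C}|)})\in X^{|\mathcal{C}|}$ (indices read modulo $|\mathcal{C}|$). That is, the recombination equation is equivalent to \[ \dot{\omega}_t = \sum_{\mathcal{C} \in \boldsymbol{P}(S)} \sum_{x^{(1)},\ldots,x^{(|\mathcal{C}|)} \in X} \frac{\varrho(\mathcal{C})}{|\mathcal{C}|} \, \omega_t \big (x^{(1)} \big) \cdots \omega_t \big (x^{(|\mathcal{C}|)} \big) \sum_{j = 1}^{|\mathcal{C}|} \Big ( \bigsqcup_{i = 1}^{|\mathcal{C}|} \pi_{C_i} \big (x^{(i + j -1)} \big) - x^{(j)} \Big ).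 \]
   Context: $\boldsymbol{P}(S)$ is the set of partitions of $S$; blocks of a partition $\mathcal{C}$ are enumerated so that $C_1$ contains $1$ and, for $k\ge 2$, $C_k$ contains the smallest element not in $C_1\cup\cdots\cup C_{k-1}$. For $A\subseteq S$, $\pi_A:X\to\prod_{i\in A}X_i$ is the coordinate projection; for pairwise disjoint $U_1,\ldots,U_k$ and sequences $y^{(\ell)}$ indexed by $U_\ell$, $y^{(1)}\sqcup\cdots\sqcup y^{(k)}$ is the sequence indexed by $\bigcup U_\ell$ with entry $y^{(j)}_i$ at site $i\in U_j$. The recombinator is $\mathcal{R}_{\mathcal{A}}(\nu)=\bigotimes_{i=1}^{|\mathcal{A}|}\pi_{A_i}.\nu$ (product of push-forward marginals). Measures on the finite set $X$ are identified with vectors in $\mathbb{R}^X$, and each $x\in X$ with the point mass $\delta_x$ (basis vector); so sums of elements of $X$ are sums of vectors. A chemical reaction network on a finite species set $\mathcal{S}$ is a finite collection of reactions $r_1+\cdots+r_m\xrightarrow{\kappa}s_1+\cdots+s_m$ with $r_i,s_i\in\mathcal{S}$ and $\kappa\ge0$; its law of mass action is the ODE $\dot c_t=\sum \kappa\, c_t(r_1)\cdots c_t(r_m)\,(s_1+\cdots+s_m-r_1-\cdots-r_m)$, summed over all reactions, for the concentration vector $c_t\in\mathbb{R}^{\mathcal{S}}$. *)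

theory Defs
  imports "HOL-Analysis.Analysis" "HOL-Library.Disjoint_Sets" "HOL-Library.FuncSet"
begin

definition partitions :: "'s set \<Rightarrow> 's set set set" where
  "partitions S = {C. partition_on S C}"

(* Enumeration of the blocks of a partition C of S (0-indexed): the first block
   contains Min S, block k contains the smallest element of S not in the
   previous blocks. blocks_upto S C k lists the first k blocks. *)
fun blocks_upto :: "nat set \<Rightarrow> nat set set \<Rightarrow> nat \<Rightarrow> nat set list" where
  "blocks_upto S C 0 = []"
| "blocks_upto S C (Suc k) =
     (let prev = blocks_upto S C k;
          m = Min (S - \<Union>(set prev))
      in prev @ [THE B. B \<in> C \<and> m \<in> B])"

(* block S C k = C_{k+1} in the paper's (1-indexed) numbering *)
definition block :: "nat set \<Rightarrow> nat set set \<Rightarrow> nat \<Rightarrow> nat set" where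
  "block S C k = blocks_upto S C (Suc k) ! k"

definition block_idx :: "nat set \<Rightarrow> nat set set \<Rightarrow> nat \<Rightarrow> nat" where
  "block_idx S C s = (THE i. i < card C \<and> s \<in> block S C i)"

definition delta :: "'x \<Rightarrow> 'x \<Rightarrow> real" where
  "delta x = (\<lambda>y. if y = x then 1 else 0)"

definition pushfwd :: "'x set \<Rightarrow> ('x \<Rightarrow> 'y) \<Rightarrow> ('x \<Rightarrow> real) \<Rightarrow> 'y \<Rightarrow> real" where
  "pushfwd X f \<nu> y = (\<Sum>z\<in>{z\<in>X. f z = y}. \<nu> z)"

definition recomb :: "(nat \<Rightarrow> 'a) set \<Rightarrow> nat set \<Rightarrow> nat set set
                      \<Rightarrow> ((nat \<Rightarrow> 'a) \<Rightarrow> real) \<Rightarrow> (nat \<Rightarrow> 'a) \<Rightarrow> real" where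
  "recomb X S A \<nu> = (\<lambda>x. \<Prod>i<card A.
       pushfwd X (\<lambda>z. restrict z (block S A i)) \<nu> (restrict x (block S A i)))"

definition recomb_rhs :: "(nat \<Rightarrow> 'a) set \<Rightarrow> nat set \<Rightarrow> (nat set set \<Rightarrow> real)
                      \<Rightarrow> ((nat \<Rightarrow> 'a) \<Rightarrow> real) \<Rightarrow> (nat \<Rightarrow> 'a) \<Rightarrow> real" where
  "recomb_rhs X S \<rho> \<omega> = (\<lambda>x. \<Sum>A\<in>partitions S. \<rho> A * (recomb X S A \<omega> x - \<omega> x))"

(* law of mass action of a chemical reaction network whose reactions are indexed
   by the finite set I: reaction i is  r_1+...+r_m --kappa i--> s_1+...+s_m
   with reactants R i = [r_1,...,r_m] and products P i = [s_1,...,s_m]. *)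
definition mass_action :: "'i set \<Rightarrow> ('i \<Rightarrow> real) \<Rightarrow> ('i \<Rightarrow> 's list) \<Rightarrow> ('i \<Rightarrow> 's list)
                           \<Rightarrow> ('s \<Rightarrow> real) \<Rightarrow> 's \<Rightarrow> real" where
  "mass_action I \<kappa> R P c = (\<lambda>y. \<Sum>i\<in>I. \<kappa> i * prod_list (map c (R i)) *
       ((\<Sum>s\<leftarrow>P i. delta s y) - (\<Sum>r\<leftarrow>R i. delta r y)))"

(* gluing: (glue S C xs j) = \<Squnion>_{i} pi_{C_i}(x^{(i+j)}) (0-based, indices mod |C|),
   i.e. at site s in block C_i it takes the entry of xs ! ((i+j) mod |C|). *)
definition glue :: "nat set \<Rightarrow> nat set set \<Rightarrow> (nat \<Rightarrow> 'a) list \<Rightarrow> nat \<Rightarrow> nat \<Rightarrow> 'a" where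
  "glue S C xs j = (\<lambda>s. if s \<in> S then (xs ! ((block_idx S C s + j) mod card C)) s else undefined)"

definition rec_reactions :: "(nat \<Rightarrow> 'a) set \<Rightarrow> nat set \<Rightarrow> (nat set set \<times> (nat \<Rightarrow> 'a) list) set" where
  "rec_reactions X S = {(C, xs). C \<in> partitions S \<and> length xs = card C \<and> set xs \<subseteq> X}"

definition rec_rate :: "(nat set set \<Rightarrow> real) \<Rightarrow> nat set set \<times> (nat \<Rightarrow> 'a) list \<Rightarrow> real" where
  "rec_rate \<rho> r = \<rho> (fst r) / real (card (fst r))"

definition rec_reactants :: "nat set set \<times> (nat \<Rightarrow> 'a) list \<Rightarrow> (nat \<Rightarrow> 'a) list" where
  "rec_reactants r = snd r"

definition rec_products :: "nat set \<Rightarrow> nat set set \<times> (nat \<Rightarrow> 'a) list \<Rightarrow> (nat \<Rightarrow> 'a) list" where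
  "rec_products S r = map (glue S (fst r) (snd r)) [0..<card (fst r)]"

end

theory Submission
  imports Defs
begin

(* For a partition C with k blocks, the mass-action terms of the reactions indexed by C
   integrate point masses against the product weight omega(x1)...omega(xk) on X^k.
   The j-th product of a reaction is the block-wise gluing of the j-fold cyclic rotation
   of the reactant tuple; rotation preserves the product weight, and the point mass of
   a gluing factorises over the blocks, so its integral is the product of the block
   marginals, i.e. R_C(omega)(y). The j-th reactant integrates to omega(y) because
   omega has total mass 1. Each of the k values of j contributes the same amount,
   which cancels the rate factor 1/k. *)

abbreviation tuples :: "'b set \<Rightarrow> nat \<Rightarrow> 'b list set" where
  "tuples X k \<equiv> {xs. length xs = k \<and> set xs \<subseteq> X}"

lemma finite_tuples: "finite X \<Longrightarrow> finite (tuples X k)"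
  using finite_lists_length_eq[of X k] by (simp add: conj_commute)

lemma sum_tuples_prod_nth:
  fixes F :: "nat \<Rightarrow> 'b \<Rightarrow> 'c::comm_semiring_1"
  assumes "finite X"
  shows "(\<Sum>xs\<in>tuples X k. \<Prod>i<k. F i (xs ! i)) = (\<Prod>i<k. \<Sum>z\<in>X. F i z)"
proof -
  have "(\<Prod>i<k. \<Sum>z\<in>X. F i z) = (\<Sum>g\<in>PiE {..<k} (\<lambda>_. X). \<Prod>i<k. F i (g i))"
    using assms by (intro prod_sum_PiE) auto
  also have "\<dots> = (\<Sum>xs\<in>tuples X k. \<Prod>i<k. F i (xs ! i))"
    by (rule sum.reindex_bij_witness[of _ "\<lambda>xs. \<lambda>i\<in>{..<k}. xs ! i" "\<lambda>g. map g [0..<k]"])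
      (auto simp: PiE_iff extensional_def set_conv_nth intro!: nth_equalityI)
  finally show ?thesis ..
qed

lemma prod_list_map_eq_prod_nth: "prod_list (map f xs) = (\<Prod>i<length xs. f (xs ! i))"
  by (simp add: prod.list_conv_set_nth atLeast0LessThan)

lemma sum_list_map_eq_sum_nth: "sum_list (map f xs) = (\<Sum>i<length xs. f (xs ! i))"
  by (simp add: sum.list_conv_set_nth atLeast0LessThan)

lemma prod_list_rotate: "prod_list (rotate n xs) = (prod_list xs :: 'a::comm_monoid_mult)"
  by (metis append_take_drop_id mult.commute prod_list.append rotate_drop_take)

lemma rotate_rotate_complement:
  "rotate (length xs - n mod length xs) (rotate n xs) = xs"
  "rotate n (rotate (length xs - n mod length xs) xs) = xs"
proof -
  have "rotate (length xs - n mod length xs + n) xs = xs"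
  proof (cases "xs = []")
    case False
    have "(length xs - n mod length xs + n) mod length xs
        = (length xs - n mod length xs + n mod length xs) mod length xs"
      by (simp add: mod_add_right_eq)
    also have "length xs - n mod length xs + n mod length xs = length xs"
      using False by (simp add: order.strict_implies_order)
    finally show ?thesis by simp
  qed simp
  then show "rotate (length xs - n mod length xs) (rotate n xs) = xs"
    "rotate n (rotate (length xs - n mod length xs) xs) = xs"
    by (simp_all add: rotate_rotate add.commute)
qed

lemma sum_tuples_rotate: "(\<Sum>xs\<in>tuples X k. f (rotate n xs)) = (\<Sum>xs\<in>tuples X k. f xs)"
  by (rule sum.reindex_bij_witness[of _ "rotate (k - n mod k)" "rotate n"])
    (auto simp: rotate_rotate_complement)

lemma prod_of_bool:
  "finite A \<Longrightarrow> (\<Prod>x\<in>A. of_bool (P x) :: 'a::comm_semiring_1) = of_bool (\<forall>x\<in>A. P x)"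
  by (induction A rule: finite_induct) auto

lemma delta_eq_of_bool: "delta x y = of_bool (x = y)"
  by (auto simp: delta_def)

lemma pushfwd_eq_sum_delta:
  "finite X \<Longrightarrow> pushfwd X f \<nu> b = (\<Sum>z\<in>X. \<nu> z * delta (f z) b)"
  by (simp add: pushfwd_def delta_def sum.inter_filter[symmetric] if_distrib eq_commute
      cong: if_cong)

lemma sum_tuples_prod_list_delta_nth:
  fixes \<nu> :: "'b \<Rightarrow> real"
  assumes "finite X" "sum \<nu> X = 1" "y \<in> X" "j < k"
  shows "(\<Sum>xs\<in>tuples X k. prod_list (map \<nu> xs) * delta (xs ! j) y) = \<nu> y"
proof -
  define F where "F i z = \<nu> z * (if i = j then delta z y else 1)" for i z
  have "prod_list (map \<nu> xs) * delta (xs ! j) y = (\<Prod>i<k. F i (xs ! i))" if "length xs = k" for xs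
    using that \<open>j < k\<close> by (simp add: F_def prod_list_map_eq_prod_nth prod.distrib prod.delta)
  then have "(\<Sum>xs\<in>tuples X k. prod_list (map \<nu> xs) * delta (xs ! j) y)
      = (\<Sum>xs\<in>tuples X k. \<Prod>i<k. F i (xs ! i))"
    by (intro sum.cong) auto
  also have "\<dots> = (\<Prod>i<k. \<Sum>z\<in>X. F i z)"
    using \<open>finite X\<close> by (rule sum_tuples_prod_nth)
  also have "\<dots> = (\<Prod>i<k. if i = j then \<nu> y else 1)"
    using assms by (intro prod.cong) (auto simp: F_def delta_eq_of_bool)
  also have "\<dots> = \<nu> y"
    using \<open>j < k\<close> by (simp add: prod.delta)
  finally show ?thesis .
qed

lemma partition_on_ex1_block:
  assumes "partition_on S C" "s \<in> S"
  shows "\<exists>!B. B \<in> C \<and> s \<in> B"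
  using partition_onD1[OF assms(1)] partition_onD2[OF assms(1)] assms(2)
  by (auto dest: disjointD)

lemma length_blocks_upto [simp]: "length (blocks_upto S C k) = k"
  by (induction k) (simp_all add: Let_def)

lemma nth_blocks_upto: "i < k \<Longrightarrow> blocks_upto S C k ! i = block S C i"
proof (induction k)
  case (Suc k)
  show ?case
  proof (cases "i < k")
    case True
    then show ?thesis
      using Suc.IH by (simp add: Let_def nth_append)
  next
    case False
    then have "i = k"
      using Suc.prems by simp
    then show ?thesis
      by (simp add: block_def)
  qed
qed simp

lemma distinct_blocks_upto:
  assumes "partition_on S C" "finite S" "k \<le> card C"
  shows "distinct (blocks_upto S C k) \<and> set (blocks_upto S C k) \<subseteq> C"
  using \<open>k \<le> card C\<close>
proof (induction k)
  case (Suc k)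
  let ?prev = "blocks_upto S C k"
  have IH: "distinct ?prev" "set ?prev \<subseteq> C"
    using Suc by auto
  have "card (set ?prev) = k"
    using IH by (simp add: distinct_card)
  then have "set ?prev \<noteq> C"
    using Suc.prems by auto
  then obtain B where B: "B \<in> C" "B \<notin> set ?prev"
    using IH(2) by blast
  then obtain s where s: "s \<in> B"
    using partition_onD3[OF assms(1)] by (metis ex_in_conv)
  have "s \<in> S - \<Union>(set ?prev)"
    using B s IH partition_onD1[OF assms(1)] partition_onD2[OF assms(1)]
    by (auto dest: disjointD)
  then have ne: "S - \<Union>(set ?prev) \<noteq> {}"
    by blast
  define m where "m = Min (S - \<Union>(set ?prev))"
  have m: "m \<in> S" "m \<notin> \<Union>(set ?prev)"
    using Min_in[OF _ ne] assms(2) unfolding m_def by auto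
  have "(THE B. B \<in> C \<and> m \<in> B) \<in> C \<and> m \<in> (THE B. B \<in> C \<and> m \<in> B)"
    using theI'[OF partition_on_ex1_block[OF assms(1) \<open>m \<in> S\<close>]] .
  then show ?case
    using IH m by (auto simp: Let_def m_def)
qed simp

lemma bij_betw_block:
  assumes "partition_on S C" "finite S"
  shows "bij_betw (block S C) {..<card C} C"
proof -
  let ?L = "blocks_upto S C (card C)"
  have L: "distinct ?L" "set ?L \<subseteq> C"
    using distinct_blocks_upto[OF assms order.refl] by auto
  then have "set ?L = C"
    using finite_elements[OF assms(2,1)] by (metis card_subset_eq distinct_card length_blocks_upto)
  then have "bij_betw ((!) ?L) {..<card C} C"
    using L by (intro bij_betw_nth) simp_all
  then show ?thesis
    by (rule bij_betw_cong[THEN iffD1, rotated]) (simp add: nth_blocks_upto)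
qed

lemma block_idx:
  assumes "partition_on S C" "finite S" "s \<in> S"
  shows "block_idx S C s < card C" "s \<in> block S C (block_idx S C s)"
    and "i < card C \<Longrightarrow> s \<in> block S C i \<Longrightarrow> block_idx S C s = i"
proof -
  have bij: "bij_betw (block S C) {..<card C} C"
    using assms(1,2) by (rule bij_betw_block)
  have "\<exists>!i. i < card C \<and> s \<in> block S C i"
  proof -
    obtain B where "B \<in> C" "s \<in> B"
      using partition_on_ex1_block[OF assms(1,3)] by blast
    then have "\<exists>i. i < card C \<and> s \<in> block S C i"
      using bij by (metis bij_betw_imp_surj_on imageE lessThan_iff)
    moreover have "i = i'"
      if "i < card C" "s \<in> block S C i" "i' < card C" "s \<in> block S C i'" for i i'
      using that bij partition_on_ex1_block[OF assms(1,3)]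
      by (metis bij_betw_apply bij_betw_imp_inj_on inj_onD lessThan_iff)
    ultimately show ?thesis
      by blast
  qed
  note ex1 = this
  show "block_idx S C s < card C" "s \<in> block S C (block_idx S C s)"
    unfolding block_idx_def using theI'[OF ex1] by simp_all
  show "i < card C \<Longrightarrow> s \<in> block S C i \<Longrightarrow> block_idx S C s = i"
    unfolding block_idx_def by (rule the1_equality[OF ex1]) simp
qed

lemma glue_rotate:
  assumes "partition_on S C" "finite S" "length xs = card C"
  shows "glue S C xs j = glue S C (rotate j xs) 0"
  using block_idx(1)[OF assms(1,2)] assms(3) by (auto simp: glue_def nth_rotate add.commute)

lemma glue_eq_iff:
  assumes "partition_on S C" "finite S" "y \<in> extensional S"
  shows "glue S C ys 0 = y \<longleftrightarrow>
    (\<forall>i<card C. restrict (ys ! i) (block S C i) = restrict y (block S C i))"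
proof
  assume glue: "glue S C ys 0 = y"
  show "\<forall>i<card C. restrict (ys ! i) (block S C i) = restrict y (block S C i)"
  proof (intro allI impI ext)
    fix i s assume "i < card C"
    show "restrict (ys ! i) (block S C i) s = restrict y (block S C i) s"
    proof (cases "s \<in> block S C i")
      case True
      have "block S C i \<in> C"
        using bij_betw_apply[OF bij_betw_block[OF assms(1,2)]] \<open>i < card C\<close> by simp
      then have "s \<in> S"
        using True partition_onD1[OF assms(1)] by blast
      moreover have "block_idx S C s = i"
        using block_idx(3)[OF assms(1,2) \<open>s \<in> S\<close> \<open>i < card C\<close> True] .
      ultimately show ?thesis
        using True \<open>i < card C\<close> glue[symmetric] by (simp add: glue_def)
    qed simp
  qed
next
  assume blocks: "\<forall>i<card C. restrict (ys ! i) (block S C i) = restrict y (block S C i)"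
  show "glue S C ys 0 = y"
  proof
    fix s
    show "glue S C ys 0 s = y s"
    proof (cases "s \<in> S")
      case True
      let ?i = "block_idx S C s"
      have "?i < card C" "s \<in> block S C ?i"
        using block_idx(1,2)[OF assms(1,2) True] by auto
      then have "(ys ! ?i) s = y s"
        using blocks by (metis restrict_apply')
      then show ?thesis
        using True \<open>?i < card C\<close> by (simp add: glue_def)
    next
      case False
      then show ?thesis
        using assms(3) by (simp add: glue_def extensional_def)
    qed
  qed
qed

lemma sum_tuples_prod_list_delta_glue:
  fixes \<nu> :: "(nat \<Rightarrow> 'a) \<Rightarrow> real"
  assumes "partition_on S C" "finite S" "finite X" "X \<subseteq> extensional S" "y \<in> X"
  shows "(\<Sum>xs\<in>tuples X (card C). prod_list (map \<nu> xs) * delta (glue S C xs j) y)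
    = recomb X S C \<nu> y"
proof -
  let ?k = "card C"
  define F where "F i z = \<nu> z * delta (restrict z (block S C i)) (restrict y (block S C i))" for i z
  have "(\<Sum>xs\<in>tuples X ?k. prod_list (map \<nu> xs) * delta (glue S C xs j) y)
      = (\<Sum>xs\<in>tuples X ?k. prod_list (map \<nu> (rotate j xs)) * delta (glue S C (rotate j xs) 0) y)"
  proof (intro sum.cong refl)
    fix xs assume "xs \<in> tuples X ?k"
    then show "prod_list (map \<nu> xs) * delta (glue S C xs j) y
        = prod_list (map \<nu> (rotate j xs)) * delta (glue S C (rotate j xs) 0) y"
      using glue_rotate[OF assms(1,2), of xs j] by (simp flip: rotate_map add: prod_list_rotate)
  qed
  also have "\<dots> = (\<Sum>xs\<in>tuples X ?k. prod_list (map \<nu> xs) * delta (glue S C xs 0) y)"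
    by (rule sum_tuples_rotate)
  also have "\<dots> = (\<Sum>xs\<in>tuples X ?k. \<Prod>i<?k. F i (xs ! i))"
  proof (intro sum.cong refl)
    fix xs assume "xs \<in> tuples X ?k"
    have "y \<in> extensional S"
      using assms(4,5) by blast
    then have "delta (glue S C xs 0) y
        = of_bool (\<forall>i<?k. restrict (xs ! i) (block S C i) = restrict y (block S C i))"
      by (simp only: delta_eq_of_bool glue_eq_iff[OF assms(1,2)])
    also have "\<dots> = (\<Prod>i<?k. delta (restrict (xs ! i) (block S C i)) (restrict y (block S C i)))"
      by (auto simp: delta_eq_of_bool prod_of_bool)
    finally show "prod_list (map \<nu> xs) * delta (glue S C xs 0) y = (\<Prod>i<?k. F i (xs ! i))"
      using \<open>xs \<in> tuples X ?k\<close> by (simp add: F_def prod_list_map_eq_prod_nth prod.distrib)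
  qed
  also have "\<dots> = (\<Prod>i<?k. \<Sum>z\<in>X. F i z)"
    using assms(3) by (rule sum_tuples_prod_nth)
  also have "\<dots> = recomb X S C \<nu> y"
    using assms(3) by (simp add: recomb_def F_def pushfwd_eq_sum_delta)
  finally show ?thesis .
qed

lemma sum_reactions_of_partition:
  fixes \<nu> :: "(nat \<Rightarrow> 'a) \<Rightarrow> real"
  assumes "partition_on S C" "finite S" "finite X" "X \<subseteq> extensional S" "sum \<nu> X = 1" "y \<in> X"
  shows "(\<Sum>xs\<in>tuples X (card C). rec_rate \<rho> (C, xs) * prod_list (map \<nu> (rec_reactants (C, xs))) *
      ((\<Sum>s\<leftarrow>rec_products S (C, xs). delta s y) - (\<Sum>r\<leftarrow>rec_reactants (C, xs). delta r y)))
    = \<rho> C * (recomb X S C \<nu> y - \<nu> y)"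
proof (cases "card C = 0")
  case True
  \<comment> \<open>Only for \<open>S = {}\<close>: the rate \<open>\<rho> C / 0\<close> is 0 and \<open>recomb\<close> is the empty
    product 1.\<close>
  then have "S = {}"
    using finite_elements[OF assms(2,1)] partition_onD1[OF assms(1)] by simp
  then have "X = {y}"
    using assms(4,6) by auto
  then have "\<nu> y = 1"
    using assms(5) by simp
  then show ?thesis
    using True by (simp add: rec_rate_def recomb_def)
next
  case False
  let ?k = "card C"
  let ?w = "\<lambda>xs. prod_list (map \<nu> xs)"
  have reaction: "rec_rate \<rho> (C, xs) * ?w (rec_reactants (C, xs)) *
      ((\<Sum>s\<leftarrow>rec_products S (C, xs). delta s y) - (\<Sum>r\<leftarrow>rec_reactants (C, xs). delta r y))
    = \<rho> C / ?k * (\<Sum>j<?k. ?w xs * delta (glue S C xs j) y - ?w xs * delta (xs ! j) y)"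
    if "xs \<in> tuples X ?k" for xs
  proof -
    have "(\<Sum>s\<leftarrow>rec_products S (C, xs). delta s y) = (\<Sum>j<?k. delta (glue S C xs j) y)"
      by (simp add: rec_products_def interv_sum_list_conv_sum_set_nat atLeast0LessThan)
    moreover have "(\<Sum>r\<leftarrow>rec_reactants (C, xs). delta r y) = (\<Sum>j<?k. delta (xs ! j) y)"
      using that by (simp add: rec_reactants_def sum_list_map_eq_sum_nth)
    ultimately show ?thesis
      by (simp add: rec_rate_def rec_reactants_def sum_subtractf sum_distrib_left
          sum_divide_distrib algebra_simps)
  qed
  have "(\<Sum>xs\<in>tuples X ?k. rec_rate \<rho> (C, xs) * ?w (rec_reactants (C, xs)) *
      ((\<Sum>s\<leftarrow>rec_products S (C, xs). delta s y) - (\<Sum>r\<leftarrow>rec_reactants (C, xs). delta r y)))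
    = \<rho> C / ?k * (\<Sum>j<?k. (\<Sum>xs\<in>tuples X ?k. ?w xs * delta (glue S C xs j) y)
        - (\<Sum>xs\<in>tuples X ?k. ?w xs * delta (xs ! j) y))"
    by (simp only: sum.cong[OF refl reaction] sum_distrib_left[symmetric] sum_subtractf
        sum.swap[of _ "tuples X ?k"])
  also have "\<dots> = \<rho> C / ?k * (\<Sum>j<?k. recomb X S C \<nu> y - \<nu> y)"
    using assms by (simp add: sum_tuples_prod_list_delta_glue sum_tuples_prod_list_delta_nth)
  also have "\<dots> = \<rho> C * (recomb X S C \<nu> y - \<nu> y)"
    using False by simp
  finally show ?thesis .
qed

lemma mass_action_rec_reactions:
  fixes \<nu> :: "(nat \<Rightarrow> 'a) \<Rightarrow> real"
  assumes "finite S" "finite X" "X \<subseteq> extensional S" "sum \<nu> X = 1" "y \<in> X"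
  shows "mass_action (rec_reactions X S) (rec_rate \<rho>) rec_reactants (rec_products S) \<nu> y
    = recomb_rhs X S \<rho> \<nu> y"
proof -
  have "rec_reactions X S = Sigma (partitions S) (\<lambda>C. tuples X (card C))"
    by (auto simp: rec_reactions_def)
  moreover have "finite (partitions S)"
    using finitely_many_partition_on[OF assms(1)] by (simp add: partitions_def)
  ultimately have "mass_action (rec_reactions X S) (rec_rate \<rho>) rec_reactants (rec_products S) \<nu> y
    = (\<Sum>C\<in>partitions S. \<Sum>xs\<in>tuples X (card C).
        rec_rate \<rho> (C, xs) * prod_list (map \<nu> (rec_reactants (C, xs))) *
        ((\<Sum>s\<leftarrow>rec_products S (C, xs). delta s y) - (\<Sum>r\<leftarrow>rec_reactants (C, xs). delta r y)))"
    using assms(2) by (simp add: mass_action_def sum.Sigma finite_tuples)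
  also have "\<dots> = recomb_rhs X S \<rho> \<nu> y"
    using assms by (simp add: recomb_rhs_def partitions_def sum_reactions_of_partition)
  finally show ?thesis .
qed

theorem theorem3p3:
  fixes n :: nat and Xs :: "nat \<Rightarrow> 'a set" and \<rho> :: "nat set set \<Rightarrow> real"
    and \<omega> :: "real \<Rightarrow> (nat \<Rightarrow> 'a) \<Rightarrow> real"
  defines "S \<equiv> {1..n}"
  defines "X \<equiv> PiE S Xs"
  assumes fin: "\<And>i. i \<in> S \<Longrightarrow> finite (Xs i)"
    and rho_nonneg: "\<And>C. C \<in> partitions S \<Longrightarrow> \<rho> C \<ge> 0"
    and prob: "\<And>t. t \<ge> 0 \<Longrightarrow> (\<forall>x\<in>X. \<omega> t x \<ge> 0) \<and> (\<Sum>x\<in>X. \<omega> t x) = 1"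
    and diff: "\<And>t x. t \<ge> 0 \<Longrightarrow> x \<in> X \<Longrightarrow> (\<lambda>s. \<omega> s x) differentiable (at t within {0..})"
  shows "(\<forall>t\<ge>0. \<forall>x\<in>X.
            ((\<lambda>s. \<omega> s x) has_real_derivative recomb_rhs X S \<rho> (\<omega> t) x) (at t within {0..}))
     \<longleftrightarrow>
         (\<forall>t\<ge>0. \<forall>x\<in>X.
            ((\<lambda>s. \<omega> s x) has_real_derivative
               mass_action (rec_reactions X S) (rec_rate \<rho>) rec_reactants (rec_products S) (\<omega> t) x)
            (at t within {0..}))"
proof -
  \<comment> \<open>The two vector fields agree on probability vectors.\<close>
  have "finite S"
    by (simp add: S_def)
  moreover have "finite X"
    using fin \<open>finite S\<close> by (simp add: X_def finite_PiE)
  moreover have "X \<subseteq> extensional S"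
    by (simp add: X_def PiE_def)
  ultimately have "mass_action (rec_reactions X S) (rec_rate \<rho>) rec_reactants (rec_products S) (\<omega> t) x
      = recomb_rhs X S \<rho> (\<omega> t) x" if "t \<ge> 0" "x \<in> X" for t x
    using prob[OF \<open>t \<ge> 0\<close>] \<open>x \<in> X\<close> by (simp add: mass_action_rec_reactions)
  then show ?thesis
    by simp
qed

end
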